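(* Let $x,y\in\mathbb{B}^2\setminus\{0\}$ be such that $0,x,y$ are noncollinear and $|x|\ne|y|$. Let $S^1(a,r_a)$ be the circle through $x,y,x^*,y^*$, where $a=i\frac{y(1+|x|^2)-x(1+|y|^2)}{2(x_2y_1-x_1y_2)}$, $r_a=\frac{|x-y|\,\big|x|y|^2-y\big|}{2|y||x_1y_2-x_2y_1|}$ (with $x=x_1+ix_2$, $y=y_1+iy_2$); it is orthogonal to $S^1$. Let $\{x_*,y_*\}=S^1\cap S^1(a,r_a)$, labelled so that $x_*,x,y,y_*$ occur in this order on the arc of $S^1(a,r_a)$ inside $\overline{\mathbb{B}^2}$. Let $w=L(x,y)\cap L(x^*,y^* )$, $u=L(x,y^* )\cap L(y,x^* )$, $v=L(x,x_* )\cap L(y,y_* )$, $s=L(x,y_* )\cap L(y,x_* )$, $t=L(x_*,y^* )\cap L(y_*,x^* )$, $k=L(x_*,x^* )\cap L(y_*,y^* )$. Let $S^1(w,r_w)$ be the circle centred at $w$ orthogonal to $S^1(a,r_a)$, and let $z$ be the point of $S^1(w,r_w)\cap S^1(a,r_a)$ in $\mathbb{B}^2$. Then: (1) the circle $S^1(w,r_w)$ is orthogonal to $S^1$, $z$ is the hyperbolic midpoint of the hyperbolic segment $J[x,y]$, and $$w=\frac{y(1-|x|^2)-x(1-|y|^2)}{|y|^2-|x|^2},\qquad r_w=\frac{|x-y|\sqrt{(1-|x|^2)(1-|y|^2)}}{\big||y|^2-|x|^2\big|};$$ (2) the points $v,s,t,k$ lie on the line $L(0,z)$, and $u$ is the intersection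 point of the lines $L(0,z)$ and $L(x_*,y_* )$, where $$u=\frac{y(1-|x|^2)+x(1-|y|^2)}{1-|x|^2|y|^2}.$$
   Context: $\mathbb{B}^2$ is the unit disk, $S^1$ the unit circle, $S^1(c,r)$ the circle with centre $c$ and radius $r$, $L(p,q)$ the line through $p,q$. For $x\ne0$, $x^*=x/|x|^2$ is the inversion of $x$ in $S^1$. Points are identified with complex numbers. The hyperbolic distance on $\mathbb{B}^2$ satisfies $\sinh\frac{\rho(x,y)}{2}=\frac{|x-y|}{\sqrt{1-|x|^2}\sqrt{1-|y|^2}}$; $J[x,y]$ is the arc of $S^1(a,r_a)$ between $x$ and $y$, and its hyperbolic midpoint is the $z\in J[x,y]$ with $\rho(x,z)=\rho(z,y)$. *)

theory Defs
  imports "HOL-Analysis.Analysis"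
begin

definition inv_pt :: "complex \<Rightarrow> complex" where
  "inv_pt x = x / complex_of_real ((cmod x)\<^sup>2)"

definition line_through :: "complex \<Rightarrow> complex \<Rightarrow> complex set" where
  "line_through p q = {p + complex_of_real t * (q - p) | t. True}"

definition orthogonal_circles :: "complex \<Rightarrow> real \<Rightarrow> complex \<Rightarrow> real \<Rightarrow> bool" where
  "orthogonal_circles c1 r1 c2 r2 \<longleftrightarrow>
     r1 > 0 \<and> r2 > 0 \<and> (dist c1 c2)\<^sup>2 = r1\<^sup>2 + r2\<^sup>2"

definition hrho :: "complex \<Rightarrow> complex \<Rightarrow> real" where
  "hrho x y = 2 * arsinh (cmod (x - y) / (sqrt (1 - (cmod x)\<^sup>2) * sqrt (1 - (cmod y)\<^sup>2)))"

text \<open>The (minor) arc of the circle S(c,r) between p and q: points of the circle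
  whose radius vector lies in the cone spanned by p - c and q - c.\<close>
definition circ_arc :: "complex \<Rightarrow> real \<Rightarrow> complex \<Rightarrow> complex \<Rightarrow> complex set" where
  "circ_arc c r p q = {e \<in> sphere c r. \<exists>\<alpha> \<beta>::real. \<alpha> \<ge> 0 \<and> \<beta> \<ge> 0 \<and>
       e - c = complex_of_real \<alpha> * (p - c) + complex_of_real \<beta> * (q - c)}"

end

theory Submission
  imports Defs
begin

text \<open>
  Every circle here is orthogonal to the unit circle, so a point p lies on S(c,r) exactly when
  Re (p * cnj c) = (1 + |p|^2) / 2. Hence S(a,r_a) contains x*, y* and meets the unit circle in
  the chord Re (p * cnj a) = 1, and w, being the intersection of the chords xy and x*y*, has
  Re (w * cnj a) = 1 as well, so it also lies on the chord x_* y_*. In each complete quadrangle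
  on four of the points x, y, x*, y*, x_*, y_* having w as a diagonal point, the other diagonal
  point (v, s, t or k) lies on the polar of w with respect to S(a,r_a). This polar is the radical
  axis of S(w,r_w) and S(a,r_a); both circles are orthogonal to the unit circle, so the axis
  passes through 0 and z, and it contains u as well.
  For every z on S(w,r_w) one has |x - z|^2 (1 - |y|^2) = |z - y|^2 (1 - |x|^2), which is the
  equality of hyperbolic distances. Finally z lies on the minor arc between x and y: it is the
  nearer to 0 of the two points where the ray from 0 through u meets S(a,r_a), while that ray
  crosses the chord [x,y] inside S(a,r_a).
\<close>

lemma line_through_iff:
  "z \<in> line_through p q \<longleftrightarrow> (\<exists>t::real. z = p + of_real t * (q - p))"
  unfolding line_through_def by auto

lemma line_through_commute:
  assumes "z \<in> line_through p q"
  shows "z \<in> line_through q p"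
proof -
  obtain t where "z = p + of_real t * (q - p)" using assms by (auto simp: line_through_iff)
  then have "z = q + of_real (1 - t) * (p - q)" by (simp add: algebra_simps)
  then show ?thesis unfolding line_through_iff by blast
qed

lemma line_through_rescale:
  assumes "z \<in> line_through p q"
  shows "(z - c) / of_real r \<in> line_through ((p - c) / of_real r) ((q - c) / of_real r)"
proof -
  obtain t where t: "z = p + of_real t * (q - p)" using assms(1) by (auto simp: line_through_iff)
  have "(z - c) / of_real r
      = (p - c) / of_real r + of_real t * ((q - c) / of_real r - (p - c) / of_real r)"
    by (cases "r = 0") (simp_all add: t field_simps)
  then show ?thesis unfolding line_through_iff by blast
qed

lemma norm_diff_power2:
  "(cmod (p - q))\<^sup>2 = (cmod p)\<^sup>2 - 2 * Re (p * cnj q) + (cmod q)\<^sup>2"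
  unfolding cmod_power2 by (simp add: power2_eq_square algebra_simps)

lemma unit_chord_equation:
  assumes "cmod p = 1" "cmod q = 1" "z \<in> line_through p q"
  shows "z + p * q * cnj z = p + q"
proof -
  obtain t where t: "z = p + of_real t * (q - p)" using assms(3) by (auto simp: line_through_iff)
  have pp: "p * cnj p = 1" and qq: "q * cnj q = 1"
    using assms(1,2) by (metis complex_norm_square mult_1 of_real_1 power2_eq_square)+
  have "p * q * cnj z = q * (p * cnj p) + of_real t * (p * (q * cnj q) - q * (p * cnj p))"
    by (simp add: t algebra_simps)
  also have "\<dots> = q + of_real t * (p - q)" by (simp add: pp qq)
  finally show ?thesis by (simp add: t algebra_simps)
qed

lemma unit_chords_intersection:
  assumes unit: "cmod p1 = 1" "cmod p2 = 1" "cmod p3 = 1" "cmod p4 = 1"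
    and distinct: "p1 \<noteq> p3" "p1 \<noteq> p4"
    and d: "d \<in> line_through p1 p2" "d \<in> line_through p3 p4"
  shows "p1 * p2 \<noteq> p3 * p4" and "cnj d = (p1 + p2 - p3 - p4) / (p1 * p2 - p3 * p4)"
proof -
  have e1: "d + p1 * p2 * cnj d = p1 + p2" and e2: "d + p3 * p4 * cnj d = p3 + p4"
    using unit_chord_equation[OF unit(1,2) d(1)] unit_chord_equation[OF unit(3,4) d(2)] .
  show ne: "p1 * p2 \<noteq> p3 * p4"
  proof
    assume prod: "p1 * p2 = p3 * p4"
    then have sum: "p1 + p2 = p3 + p4" using e1 e2 by simp
    have "(p1 - p3) * (p1 - p4) = p1 * p1 - p1 * (p3 + p4) + p3 * p4" by (simp add: algebra_simps)
    also have "\<dots> = 0" unfolding sum[symmetric] prod[symmetric] by (simp add: algebra_simps)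
    finally show False using distinct by simp
  qed
  have "cnj d * (p1 * p2 - p3 * p4) = (d + p1 * p2 * cnj d) - (d + p3 * p4 * cnj d)"
    by (simp add: algebra_simps)
  also have "\<dots> = p1 + p2 - p3 - p4" unfolding e1 e2 by simp
  finally have "cnj d * (p1 * p2 - p3 * p4) = p1 + p2 - p3 - p4" .
  then show "cnj d = (p1 + p2 - p3 - p4) / (p1 * p2 - p3 * p4)"
    using ne by (simp add: field_simps)
qed

lemma unit_diagonal_points_conjugate:
  assumes unit: "cmod p1 = 1" "cmod p2 = 1" "cmod p3 = 1" "cmod p4 = 1"
    and distinct: "p1 \<noteq> p2" "p1 \<noteq> p3" "p1 \<noteq> p4"
    and d: "d \<in> line_through p1 p2" "d \<in> line_through p3 p4"
    and e: "e \<in> line_through p1 p3" "e \<in> line_through p2 p4"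
  shows "e * cnj d + cnj e * d = 2"
proof -
  define A where "A = p1 * p2 - p3 * p4"
  define B where "B = p1 * p3 - p2 * p4"
  have A: "A \<noteq> 0" and cd: "cnj d = (p1 + p2 - p3 - p4) / A"
    using unit_chords_intersection[OF unit distinct(2,3) d] by (simp_all add: A_def)
  have B: "B \<noteq> 0" and ce: "cnj e = (p1 + p3 - p2 - p4) / B"
    using unit_chords_intersection[OF unit(1,3,2,4) distinct(1,3) e] by (simp_all add: B_def)
  have "d + p1 * p2 * cnj d = p1 + p2" "e + p1 * p3 * cnj e = p1 + p3"
    using unit_chord_equation[OF unit(1,2) d(1)] unit_chord_equation[OF unit(1,3) e(1)] .
  then have "d = p1 + p2 - p1 * p2 * cnj d" "e = p1 + p3 - p1 * p3 * cnj e"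
    by (simp_all add: eq_diff_eq)
  then have "e * cnj d + cnj e * d
      = (p1 + p3 - p1 * p3 * cnj e) * cnj d + cnj e * (p1 + p2 - p1 * p2 * cnj d)"
    by simp
  also have "\<dots> = ((p1 + p3) * ((p1 + p2 - p3 - p4) * B)
        - p1 * p3 * (p1 + p3 - p2 - p4) * (p1 + p2 - p3 - p4)
        + (p1 + p3 - p2 - p4) * A * (p1 + p2)
        - p1 * p2 * (p1 + p3 - p2 - p4) * (p1 + p2 - p3 - p4)) / (A * B)"
    unfolding cd ce using A B by (simp add: field_simps)
  also have "\<dots> = (2 * (A * B)) / (A * B)"
    unfolding A_def B_def by (rule arg_cong[where f="\<lambda>t. t / _"]) algebra
  also have "\<dots> = 2" using A B by simp
  finally show ?thesis .
qed

lemma diagonal_points_conjugate: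
  assumes r: "r > 0"
    and on_circle: "cmod (p1 - c) = r" "cmod (p2 - c) = r" "cmod (p3 - c) = r" "cmod (p4 - c) = r"
    and distinct: "p1 \<noteq> p2" "p1 \<noteq> p3" "p1 \<noteq> p4"
    and d: "d \<in> line_through p1 p2" "d \<in> line_through p3 p4"
    and e: "e \<in> line_through p1 p3" "e \<in> line_through p2 p4"
  shows "Re ((e - c) * cnj (d - c)) = r\<^sup>2"
proof -
  define f where "f p = (p - c) / complex_of_real r" for p
  have r0: "r \<noteq> 0" using r by simp
  have unit: "cmod (f p1) = 1" "cmod (f p2) = 1" "cmod (f p3) = 1" "cmod (f p4) = 1"
    and distinct': "f p1 \<noteq> f p2" "f p1 \<noteq> f p3" "f p1 \<noteq> f p4"
    using on_circle distinct r by (auto simp: f_def norm_divide)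
  have lines: "f d \<in> line_through (f p1) (f p2)" "f d \<in> line_through (f p3) (f p4)"
    "f e \<in> line_through (f p1) (f p3)" "f e \<in> line_through (f p2) (f p4)"
    unfolding f_def using d e by (auto intro: line_through_rescale)
  have "f e * cnj (f d) + cnj (f e) * f d = 2"
    by (rule unit_diagonal_points_conjugate[OF unit distinct' lines])
  moreover have "Re (f e * cnj (f d) + cnj (f e) * f d) = 2 * Re ((e - c) * cnj (d - c)) / r\<^sup>2"
    unfolding f_def by (simp add: power2_eq_square add_divide_distrib[symmetric] algebra_simps)
  ultimately show ?thesis using r0 by (simp add: field_simps)
qed

lemma chords_intersection_unique:
  assumes r: "r > 0"
    and on_circle: "cmod (p1 - c) = r" "cmod (p2 - c) = r" "cmod (p3 - c) = r" "cmod (p4 - c) = r"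
    and distinct: "p1 \<noteq> p3" "p1 \<noteq> p4"
    and d: "d \<in> line_through p1 p2" "d \<in> line_through p3 p4"
    and d': "d' \<in> line_through p1 p2" "d' \<in> line_through p3 p4"
  shows "d' = d"
proof -
  define f where "f p = (p - c) / complex_of_real r" for p
  have r0: "r \<noteq> 0" using r by simp
  have unit: "cmod (f p1) = 1" "cmod (f p2) = 1" "cmod (f p3) = 1" "cmod (f p4) = 1"
    and distinct': "f p1 \<noteq> f p3" "f p1 \<noteq> f p4"
    using on_circle distinct r by (auto simp: f_def norm_divide)
  have lines: "f d \<in> line_through (f p1) (f p2)" "f d \<in> line_through (f p3) (f p4)"
    "f d' \<in> line_through (f p1) (f p2)" "f d' \<in> line_through (f p3) (f p4)"
    unfolding f_def using d d' by (auto intro: line_through_rescale)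
  have "cnj (f d) = cnj (f d')"
    using unit_chords_intersection(2)[OF unit distinct' lines(1,2)]
      unit_chords_intersection(2)[OF unit distinct' lines(3,4)] by simp
  then show ?thesis unfolding f_def using r0 by (simp add: field_simps)
qed

lemma orthogonal_to_same_vector_real_multiple:
  assumes "a \<noteq> 0" "q \<noteq> 0" "Re (p * cnj a) = 0" "Re (q * cnj a) = 0"
  shows "\<exists>t::real. p = of_real t * q"
proof -
  define s where "s = Im (p * cnj a)"
  define s' where "s' = Im (q * cnj a)"
  have pa: "p * cnj a = \<i> * of_real s" and qa: "q * cnj a = \<i> * of_real s'"
    using assms(3,4) by (simp_all add: complex_eq_iff s_def s'_def)
  have "q * cnj a \<noteq> 0" using assms(1,2) by simp
  then have "s' \<noteq> 0" using qa by auto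
  then have "p * cnj a = of_real (s / s') * (q * cnj a)" unfolding pa qa by simp
  then have "p * cnj a = (of_real (s / s') * q) * cnj a" by (simp only: mult.assoc)
  then have "p = of_real (s / s') * q" using assms(1) by (metis complex_cnj_zero_iff mult_right_cancel)
  then show ?thesis by blast
qed

definition cross :: "complex \<Rightarrow> complex \<Rightarrow> real" where
  "cross p q = Re p * Im q - Im p * Re q"

lemma cross_ne_0_if_not_collinear:
  assumes "\<not> collinear {0, x, y}"
  shows "cross x y \<noteq> 0"
proof
  assume "cross x y = 0"
  then have "Im (y / x) = 0" by (simp add: Im_divide cross_def algebra_simps)
  then have "collinear {0, x, y}" by (simp add: collinear_iff_Reals complex_is_Real_iff)
  with assms show False by simp
qed

text \<open>The hypothesis beyond says that v and the centre 0 lie on opposite sides of the line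
  through u1 and u2, since cross (u2 - u1) (0 - u1) = cross u1 u2.\<close>

lemma circle_point_beyond_chord_in_cone:
  assumes r: "r > 0" and on_circle: "cmod u1 = r" "cmod u2 = r" "cmod v = r"
    and independent: "cross u1 u2 \<noteq> 0"
    and beyond: "cross (u2 - u1) (v - u1) * cross u1 u2 < 0"
  shows "\<exists>\<alpha> \<beta>::real. \<alpha> \<ge> 0 \<and> \<beta> \<ge> 0 \<and> v = of_real \<alpha> * u1 + of_real \<beta> * u2"
proof -
  define C where "C = cross u1 u2"
  define \<alpha> where "\<alpha> = cross v u2 / C"
  define \<beta> where "\<beta> = cross u1 v / C"
  have C: "C \<noteq> 0" using independent C_def by simp
  have v: "v = of_real \<alpha> * u1 + of_real \<beta> * u2"
  proof (rule complex_eqI)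
    have "C * Re v = cross v u2 * Re u1 + cross u1 v * Re u2"
      "C * Im v = cross v u2 * Im u1 + cross u1 v * Im u2"
      unfolding C_def cross_def by algebra+
    then show "Re v = Re (of_real \<alpha> * u1 + of_real \<beta> * u2)"
      "Im v = Im (of_real \<alpha> * u1 + of_real \<beta> * u2)"
      unfolding \<alpha>_def \<beta>_def using C by (simp_all add: field_simps)
  qed
  have "cross (u2 - u1) (v - u1) = C - cross v u2 - cross u1 v"
    unfolding C_def cross_def by (simp add: algebra_simps)
  also have "\<dots> = C * (1 - \<alpha> - \<beta>)" unfolding \<alpha>_def \<beta>_def using C by (simp add: field_simps)
  finally have "C * C * (1 - \<alpha> - \<beta>) < 0"
    using beyond unfolding C_def by (simp add: mult_ac)
  moreover have "C * C > 0" using C by (auto simp: zero_less_mult_iff linorder_neq_iff)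
  ultimately have sum: "\<alpha> + \<beta> > 1" by (simp add: mult_less_0_iff)
  have dot: "Re (u1 * cnj u2) \<le> r\<^sup>2"
    using complex_Re_le_cmod[of "u1 * cnj u2"] on_circle by (simp add: norm_mult power2_eq_square)
  have "(cmod v)\<^sup>2 = \<alpha>\<^sup>2 * (cmod u1)\<^sup>2 + \<beta>\<^sup>2 * (cmod u2)\<^sup>2 + 2 * \<alpha> * \<beta> * Re (u1 * cnj u2)"
    unfolding v cmod_power2 by (simp add: power2_eq_square algebra_simps)
  then have norm_v: "r\<^sup>2 = (\<alpha>\<^sup>2 + \<beta>\<^sup>2) * r\<^sup>2 + 2 * \<alpha> * \<beta> * Re (u1 * cnj u2)"
    using on_circle by (simp add: algebra_simps)
  have "\<alpha> * \<beta> \<ge> 0"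
  proof (rule ccontr)
    assume "\<not> \<alpha> * \<beta> \<ge> 0"
    then have "2 * \<alpha> * \<beta> * Re (u1 * cnj u2) \<ge> 2 * \<alpha> * \<beta> * r\<^sup>2"
      using dot by (simp add: mult_left_mono_neg)
    then have "r\<^sup>2 * 1 \<ge> r\<^sup>2 * (\<alpha> + \<beta>)\<^sup>2"
      using norm_v by (simp add: power2_eq_square algebra_simps)
    moreover have "(\<alpha> + \<beta>)\<^sup>2 > 1" using sum by (simp add: one_less_power)
    ultimately show False using r by (simp add: mult_le_cancel_left)
  qed
  then have "\<alpha> \<ge> 0 \<and> \<beta> \<ge> 0" using sum by (auto simp: zero_le_mult_iff)
  then show ?thesis using v by blast
qed

lemma convex_combination_inside_circle:
  assumes "cmod (p - c) = r" "cmod (q - c) = r" "p \<noteq> q" "0 < \<alpha>" "\<alpha> < 1"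
  shows "cmod (of_real \<alpha> * p + of_real (1 - \<alpha>) * q - c) < r"
proof -
  have "of_real \<alpha> * p + of_real (1 - \<alpha>) * q - c = of_real \<alpha> * (p - c) + of_real (1 - \<alpha>) * (q - c)"
    by (simp add: algebra_simps)
  also have "(cmod (of_real \<alpha> * (p - c) + of_real (1 - \<alpha>) * (q - c)))\<^sup>2
      = \<alpha> * (cmod (p - c))\<^sup>2 + (1 - \<alpha>) * (cmod (q - c))\<^sup>2 - \<alpha> * (1 - \<alpha>) * (cmod (p - q))\<^sup>2"
    unfolding cmod_power2 by (simp add: power2_eq_square algebra_simps)
  finally have "(cmod (of_real \<alpha> * p + of_real (1 - \<alpha>) * q - c))\<^sup>2
      = r\<^sup>2 - \<alpha> * (1 - \<alpha>) * (cmod (p - q))\<^sup>2"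
    using assms(1,2) by (simp add: algebra_simps)
  also have "\<dots> < r\<^sup>2" using assms(3-5) by simp
  finally show ?thesis using assms(1) norm_ge_zero by (blast intro: power2_less_imp_less)
qed

lemma smaller_root_below_negative_point:
  fixes c \<tau> \<kappa> :: real
  assumes "c \<ge> 0" "c * \<tau>\<^sup>2 - 2 * \<tau> + 1 = 0" "c * \<tau>\<^sup>2 < 1" "c * \<kappa>\<^sup>2 - 2 * \<kappa> + 1 < 0"
  shows "\<tau> < \<kappa>"
proof (rule ccontr)
  assume "\<not> \<tau> < \<kappa>"
  moreover have "(\<kappa> - \<tau>) * (c * (\<kappa> + \<tau>) - 2) < 0"
    using assms(2,4) by (simp add: algebra_simps power2_eq_square)
  ultimately have "\<kappa> < \<tau>" "c * (\<kappa> + \<tau>) > 2" by (auto simp: mult_less_0_iff)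
  then have "c * \<tau> > 1" using assms(1) mult_left_mono[of \<kappa> \<tau> c] by (simp add: algebra_simps)
  moreover have "\<tau> > 0" using assms(1,2) zero_le_power2[of \<tau>] by (smt (verit) mult_nonneg_nonneg)
  ultimately have "c * \<tau>\<^sup>2 > \<tau>" using mult_strict_right_mono[of 1 "c * \<tau>" \<tau>]
    by (simp add: power2_eq_square mult.assoc)
  then show False using assms(2,3) by linarith
qed

lemma on_circle_orthogonal_to_unit_iff:
  assumes "(cmod a)\<^sup>2 = 1 + r\<^sup>2" "r \<ge> 0"
  shows "cmod (p - a) = r \<longleftrightarrow> Re (p * cnj a) = (1 + (cmod p)\<^sup>2) / 2"
proof -
  have "cmod (p - a) = r \<longleftrightarrow> (cmod (p - a))\<^sup>2 = r\<^sup>2"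
    using assms(2) by (simp add: power2_eq_iff_nonneg)
  also have "\<dots> \<longleftrightarrow> Re (p * cnj a) = (1 + (cmod p)\<^sup>2) / 2"
    unfolding norm_diff_power2 assms(1) by (auto simp: field_simps)
  finally show ?thesis .
qed

lemma norm_inv_pt: "cmod (inv_pt p) = 1 / cmod p"
  unfolding inv_pt_def by (cases "p = 0") (simp_all add: norm_divide norm_mult power2_eq_square)

lemma inv_pt_on_circle_orthogonal_to_unit:
  assumes "p \<noteq> 0" "Re (p * cnj a) = (1 + (cmod p)\<^sup>2) / 2"
  shows "Re (inv_pt p * cnj a) = (1 + (cmod (inv_pt p))\<^sup>2) / 2"
proof -
  have "Re (inv_pt p * cnj a) = Re (p * cnj a) / (cmod p)\<^sup>2"
    unfolding inv_pt_def by (simp add: Re_divide_of_real)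
  then show ?thesis using assms by (simp add: norm_inv_pt field_simps power2_eq_square)
qed

lemma unit_circle_meets_orthogonal_circle_twice:
  assumes a: "(cmod a)\<^sup>2 = 1 + r\<^sup>2" and r: "r > 0"
    and meet: "sphere 0 1 \<inter> sphere a r = {p, q}"
  shows "p \<noteq> q"
proof
  assume "p = q"
  \<comment> \<open>the two intersection points are a (1 \<plusminus> \<i> r) / |a|^2\<close>
  define e where "e s = a * Complex 1 s / of_real ((cmod a)\<^sup>2)" for s
  have a0: "a \<noteq> 0" using a add_pos_nonneg[OF zero_less_one zero_le_power2[of r]] by auto
  have "e s \<in> sphere 0 1 \<inter> sphere a r" if s: "s\<^sup>2 = r\<^sup>2" for s
  proof -
    have es: "e s * cnj a = Complex 1 s"
      using a0 unfolding e_def complex_norm_square by (simp add: field_simps)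
    have "cmod (e s) * cmod a = cmod (Complex 1 s)"
      using arg_cong[OF es, of cmod] by (simp add: norm_mult)
    also have "\<dots> = cmod a" using a s by (simp add: cmod_def)
    finally have "cmod (e s) = 1" using a0 by simp
    moreover have "Re (e s * cnj a) = 1" using es by simp
    ultimately show ?thesis
      using on_circle_orthogonal_to_unit_iff[OF a, of "e s"] r by (simp add: dist_norm norm_minus_commute)
  qed
  then have "e r = p" "e (- r) = p" using meet \<open>p = q\<close> by auto
  then have "e r = e (- r)" by simp
  then have "Complex 1 r = Complex 1 (- r)" using a0 unfolding e_def by simp
  then show False using r by simp
qed

lemma common_chord_of_circle_orthogonal_to_unit:
  assumes a: "(cmod a)\<^sup>2 = 1 + r\<^sup>2" and r: "r > 0"
    and meet: "sphere 0 1 \<inter> sphere a r = {p, q}"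
    and z: "Re (z * cnj a) = 1"
  shows "z \<in> line_through p q"
proof -
  have "cmod p = 1" "cmod (p - a) = r" "cmod q = 1" "cmod (q - a) = r"
    using meet by (auto simp: dist_norm norm_minus_commute)
  then have "Re (p * cnj a) = 1" "Re (q * cnj a) = 1"
    using on_circle_orthogonal_to_unit_iff[OF a less_imp_le[OF r]] by simp_all
  moreover have "a \<noteq> 0" using a add_pos_nonneg[OF zero_less_one zero_le_power2[of r]] by auto
  moreover have "p \<noteq> q" using unit_circle_meets_orthogonal_circle_twice[OF a r meet] .
  ultimately obtain t where "z - p = of_real t * (q - p)"
    using orthogonal_to_same_vector_real_multiple[of a "q - p" "z - p"] z
    by (auto simp: algebra_simps)
  then show ?thesis unfolding line_through_iff by (auto simp: algebra_simps)
qed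

lemma hrho_eq_on_bisector:
  assumes x: "cmod x < 1" and y: "cmod y < 1" and z: "cmod z < 1"
    and w: "w * of_real ((cmod y)\<^sup>2 - (cmod x)\<^sup>2)
            = y * of_real (1 - (cmod x)\<^sup>2) - x * of_real (1 - (cmod y)\<^sup>2)"
    and z_on: "(cmod (z - w))\<^sup>2 = (cmod w)\<^sup>2 - 1"
  shows "hrho x z = hrho z y"
proof -
  define X Y Z where "X = (cmod x)\<^sup>2" and "Y = (cmod y)\<^sup>2" and "Z = (cmod z)\<^sup>2"
  have X: "X < 1" and Y: "Y < 1" and Z: "Z < 1"
    using x y z by (simp_all add: X_def Y_def Z_def abs_square_less_1)
  have zw: "Z - 2 * Re (z * cnj w) + 1 = 0"
    using z_on norm_diff_power2[of z w] unfolding Z_def by simp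
  have "x * of_real (1 - Y) - y * of_real (1 - X) = - (w * of_real (Y - X))"
    using w unfolding X_def Y_def by simp
  then have wXY: "w * of_real (X - Y) = x * of_real (1 - Y) - y * of_real (1 - X)"
    by (metis minus_diff_eq mult_minus_right of_real_minus)
  have "(X - Y) * Re (z * cnj w) = Re (z * cnj (w * of_real (X - Y)))"
    by (simp add: algebra_simps)
  also have "\<dots> = (1 - Y) * Re (z * cnj x) - (1 - X) * Re (z * cnj y)"
    unfolding wXY by (simp add: algebra_simps)
  finally have wxy: "(X - Y) * Re (z * cnj w) = (1 - Y) * Re (z * cnj x) - (1 - X) * Re (z * cnj y)" .
  have "(cmod (x - z))\<^sup>2 * (1 - Y) - (cmod (z - y))\<^sup>2 * (1 - X)
      = (X - Y) * (1 + Z) - 2 * ((1 - Y) * Re (z * cnj x) - (1 - X) * Re (z * cnj y))"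
    unfolding norm_diff_power2 X_def Y_def Z_def by (simp add: algebra_simps)
  also have "\<dots> = (X - Y) * (Z - 2 * Re (z * cnj w) + 1)"
    unfolding wxy[symmetric] by (simp add: algebra_simps)
  finally have "(cmod (x - z))\<^sup>2 * (1 - Y) = (cmod (z - y))\<^sup>2 * (1 - X)"
    unfolding zw by simp
  then have "(cmod (x - z) * sqrt (1 - Y))\<^sup>2 = (cmod (z - y) * sqrt (1 - X))\<^sup>2"
    using X Y by (simp add: power_mult_distrib)
  then have "cmod (x - z) * sqrt (1 - Y) = cmod (z - y) * sqrt (1 - X)"
    using X Y by (simp add: power2_eq_iff_nonneg)
  then have "cmod (x - z) / (sqrt (1 - X) * sqrt (1 - Z))
      = cmod (z - y) / (sqrt (1 - Z) * sqrt (1 - Y))"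
    using X Y Z by (simp add: field_simps)
  then show ?thesis unfolding hrho_def X_def Y_def Z_def by simp
qed

lemma Re_mult_cnj_linear_combination:
  "Re ((p * of_real a1 + q * of_real b1) * cnj (p * of_real a2 + q * of_real b2))
   = a1 * a2 * (cmod p)\<^sup>2 + b1 * b2 * (cmod q)\<^sup>2 + (a1 * b2 + b1 * a2) * Re (p * cnj q)"
  unfolding cmod_power2 by (simp add: algebra_simps power2_eq_square)

locale disk_pair =
  fixes x y a :: complex and ra :: real
  assumes x_in_disk: "cmod x < 1" and y_in_disk: "cmod y < 1"
    and independent: "cross x y \<noteq> 0"
    and norms_distinct: "cmod x \<noteq> cmod y"
    and centre_eq: "a = \<i> * (y * complex_of_real (1 + (cmod x)\<^sup>2) - x * complex_of_real (1 + (cmod y)\<^sup>2))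
                 / complex_of_real (2 * (Im x * Re y - Re x * Im y))"
    and radius_eq: "ra = cmod (x - y) * cmod (x * complex_of_real ((cmod y)\<^sup>2) - y)
                 / (2 * cmod y * \<bar>Re x * Im y - Im x * Re y\<bar>)"
begin

definition X where "X = (cmod x)\<^sup>2"
definition Y where "Y = (cmod y)\<^sup>2"

lemma x_ne_0: "x \<noteq> 0" and y_ne_0: "y \<noteq> 0" and x_ne_y: "x \<noteq> y"
  using independent by (auto simp: cross_def)

lemma X_bounds: "0 < X" "X < 1" and Y_bounds: "0 < Y" "Y < 1" and X_ne_Y: "X \<noteq> Y"
  using x_ne_0 y_ne_0 x_in_disk y_in_disk norms_distinct
  unfolding X_def Y_def by (simp_all add: abs_square_less_1 power2_eq_iff_nonneg)

lemma centre_coordinates: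
  "Re a = (Im y * (1 + X) - Im x * (1 + Y)) / (2 * cross x y)"
  "Im a = (Re x * (1 + Y) - Re y * (1 + X)) / (2 * cross x y)"
  using independent unfolding centre_eq cross_def X_def Y_def
  by (simp_all add: Re_divide_of_real Im_divide_of_real divide_simps) (simp_all add: algebra_simps)

lemma Re_x_cnj_centre: "Re (x * cnj a) = (1 + X) / 2"
proof -
  have "Re (x * cnj a)
      = (Re x * (Im y * (1 + X) - Im x * (1 + Y)) + Im x * (Re x * (1 + Y) - Re y * (1 + X)))
        / (2 * cross x y)"
    by (simp add: centre_coordinates add_divide_distrib)
  also have "\<dots> = (1 + X) * cross x y / (2 * cross x y)"
    by (simp add: cross_def algebra_simps)
  finally show ?thesis using independent by simp
qed

lemma Re_y_cnj_centre: "Re (y * cnj a) = (1 + Y) / 2"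
proof -
  have "Re (y * cnj a)
      = (Re y * (Im y * (1 + X) - Im x * (1 + Y)) + Im y * (Re x * (1 + Y) - Re y * (1 + X)))
        / (2 * cross x y)"
    by (simp add: centre_coordinates add_divide_distrib)
  also have "\<dots> = (1 + Y) * cross x y / (2 * cross x y)"
    by (simp add: cross_def algebra_simps)
  finally show ?thesis using independent by simp
qed

lemma norm_centre_power2: "(cmod a)\<^sup>2 = 1 + ra\<^sup>2"
proof -
  define c where "c = cross x y"
  have c: "c \<noteq> 0" using independent by (simp add: c_def)
  have "x * of_real Y - y = y * (x * cnj y - 1)"
    unfolding Y_def complex_norm_square by (simp add: algebra_simps)
  then have "cmod (x * of_real Y - y) = cmod y * cmod (1 - x * cnj y)"
    by (simp add: norm_mult norm_minus_commute)
  then have ra: "ra = cmod (x - y) * cmod (1 - x * cnj y) / (2 * \<bar>c\<bar>)"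
    using y_ne_0 unfolding radius_eq c_def cross_def Y_def by simp
  have "\<bar>2 * (Im x * Re y - Re x * Im y)\<bar> = 2 * \<bar>c\<bar>"
    unfolding c_def cross_def abs_mult by (simp add: abs_minus_commute mult.commute)
  then have a: "cmod a = cmod (y * of_real (1 + X) - x * of_real (1 + Y)) / (2 * \<bar>c\<bar>)"
    unfolding centre_eq norm_divide norm_mult norm_ii norm_of_real X_def Y_def by simp
  have "(cmod (y * of_real (1 + X) - x * of_real (1 + Y)))\<^sup>2
      = 4 * c\<^sup>2 + (cmod (x - y))\<^sup>2 * (cmod (1 - x * cnj y))\<^sup>2"
    unfolding c_def cross_def cmod_power2 X_def Y_def by simp algebra
  then show ?thesis using c unfolding a ra by (simp add: power_divide power_mult_distrib field_simps)
qed

lemma radius_nonneg: "0 \<le> ra"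
  unfolding radius_eq by simp

lemma on_circle:
  "cmod (x - a) = ra" "cmod (y - a) = ra" "cmod (inv_pt x - a) = ra" "cmod (inv_pt y - a) = ra"
  using on_circle_orthogonal_to_unit_iff[OF norm_centre_power2 radius_nonneg]
    inv_pt_on_circle_orthogonal_to_unit x_ne_0 y_ne_0 Re_x_cnj_centre Re_y_cnj_centre
  unfolding X_def Y_def by simp_all

lemma radius_pos: "0 < ra"
  using on_circle(1,2) radius_nonneg x_ne_y by force

lemma norm_inv_pt_gt_1: "cmod (inv_pt x) > 1" "cmod (inv_pt y) > 1"
  using x_ne_0 y_ne_0 x_in_disk y_in_disk by (simp_all add: norm_inv_pt)

lemma x_ne_inv_pt: "x \<noteq> inv_pt x" "x \<noteq> inv_pt y"
  using norm_inv_pt_gt_1 x_in_disk by auto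

lemma centre_beyond_chord: "cross (y - x) (a - x) * cross x y < 0"
proof -
  define c where "c = cross x y"
  have c: "c \<noteq> 0" using independent by (simp add: c_def)
  have "2 * c * cross (y - x) (a - x)
      = (Re y - Re x) * (2 * c * Im a - 2 * c * Im x) - (Im y - Im x) * (2 * c * Re a - 2 * c * Re x)"
    by (simp add: cross_def algebra_simps)
  also have "\<dots> = (Re y - Re x) * ((Re x * (1 + Y) - Re y * (1 + X)) - 2 * c * Im x)
      - (Im y - Im x) * ((Im y * (1 + X) - Im x * (1 + Y)) - 2 * c * Re x)"
    using c unfolding c_def by (simp add: centre_coordinates)
  also have "\<dots> = - (1 - Re (x * cnj y)) * (cmod (x - y))\<^sup>2"
    unfolding c_def cross_def cmod_power2 X_def Y_def by simp algebra
  finally have eq: "2 * c * cross (y - x) (a - x) = - (1 - Re (x * cnj y)) * (cmod (x - y))\<^sup>2" .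
  have "Re (x * cnj y) \<le> cmod x * cmod y"
    using complex_Re_le_cmod[of "x * cnj y"] by (simp add: norm_mult)
  also have "\<dots> < 1 * 1" by (rule mult_strict_mono') (use x_in_disk y_in_disk in auto)
  finally have "0 < (1 - Re (x * cnj y)) * (cmod (x - y))\<^sup>2" using x_ne_y by simp
  moreover have "2 * (cross (y - x) (a - x) * c) = - ((1 - Re (x * cnj y)) * (cmod (x - y))\<^sup>2)"
    using eq by (simp add: algebra_simps)
  ultimately show ?thesis unfolding c_def by linarith
qed

definition w0 where "w0 = (y * of_real (1 - X) - x * of_real (1 - Y)) / of_real (Y - X)"

definition u0 where "u0 = (y * of_real (1 - X) + x * of_real (1 - Y)) / of_real (1 - X * Y)"

lemma XY_lt_1: "X * Y < 1"
  using mult_strict_mono'[of X 1 Y 1] X_bounds Y_bounds by simp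

lemma w0_on_lines: "w0 \<in> line_through x y" "w0 \<in> line_through (inv_pt x) (inv_pt y)"
proof -
  have "Y - X \<noteq> 0" using X_ne_Y by simp
  then have "w0 = x + of_real ((1 - X) / (Y - X)) * (y - x)"
    "w0 = x / of_real X + of_real (Y * (1 - X) / (Y - X)) * (y / of_real Y - x / of_real X)"
    unfolding w0_def using X_bounds Y_bounds by (simp_all add: complex_eq_iff field_simps)
  then show "w0 \<in> line_through x y" "w0 \<in> line_through (inv_pt x) (inv_pt y)"
    unfolding line_through_iff inv_pt_def X_def Y_def by blast+
qed

lemma u0_on_lines: "u0 \<in> line_through x (inv_pt y)" "u0 \<in> line_through y (inv_pt x)"
proof -
  have "1 - X * Y \<noteq> 0" using XY_lt_1 by simp
  then have "u0 = x + of_real ((1 - X) * Y / (1 - X * Y)) * (y / of_real Y - x)"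
    "u0 = y + of_real ((1 - Y) * X / (1 - X * Y)) * (x / of_real X - y)"
    unfolding u0_def using X_bounds Y_bounds
    by (simp_all add: complex_eq_iff field_simps)
  then show "u0 \<in> line_through x (inv_pt y)" "u0 \<in> line_through y (inv_pt x)"
    unfolding line_through_iff inv_pt_def X_def Y_def by blast+
qed

lemma Re_w0_cnj_centre: "Re (w0 * cnj a) = 1"
proof -
  have "Re (w0 * cnj a) = ((1 - X) * Re (y * cnj a) - (1 - Y) * Re (x * cnj a)) / (Y - X)"
    unfolding w0_def by (simp add: algebra_simps)
  also have "\<dots> = 1"
    unfolding Re_x_cnj_centre Re_y_cnj_centre using X_ne_Y by (simp add: field_simps)
  finally show ?thesis .
qed

lemma Re_u0_cnj_centre: "Re (u0 * cnj a) = 1"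
proof -
  have "Re (u0 * cnj a) = ((1 - X) * Re (y * cnj a) + (1 - Y) * Re (x * cnj a)) / (1 - X * Y)"
    unfolding u0_def by (simp add: algebra_simps)
  also have "\<dots> = 1"
    unfolding Re_x_cnj_centre Re_y_cnj_centre using XY_lt_1 by (simp add: field_simps)
  finally show ?thesis .
qed

lemma Re_u0_cnj_w0: "Re (u0 * cnj w0) = 1"
proof -
  have "Re (u0 * cnj w0) = Re ((y * of_real (1 - X) + x * of_real (1 - Y))
      * cnj (y * of_real (1 - X) + x * of_real (Y - 1))) / ((1 - X * Y) * (Y - X))"
    unfolding u0_def w0_def by (simp add: algebra_simps)
  also have "\<dots> = ((1 - X) * (1 - X) * Y + (1 - Y) * (Y - 1) * X
      + ((1 - X) * (Y - 1) + (1 - Y) * (1 - X)) * Re (y * cnj x)) / ((1 - X * Y) * (Y - X))"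
    unfolding Re_mult_cnj_linear_combination X_def[symmetric] Y_def[symmetric] ..
  also have "\<dots> = ((1 - X * Y) * (Y - X)) / ((1 - X * Y) * (Y - X))"
    by (rule arg_cong[where f="\<lambda>t. t / _"]) algebra
  also have "\<dots> = 1" using XY_lt_1 X_ne_Y by simp
  finally show ?thesis .
qed

lemma norm_w0_power2: "(cmod w0)\<^sup>2 - 1 = (cmod (x - y))\<^sup>2 * ((1 - X) * (1 - Y)) / (Y - X)\<^sup>2"
proof -
  define P where "P = Re (y * cnj x)"
  define N where "N = y * of_real (1 - X) + x * of_real (Y - 1)"
  have "w0 = N / of_real (Y - X)" unfolding w0_def N_def by (simp add: algebra_simps)
  then have w0: "(cmod w0)\<^sup>2 = (cmod N)\<^sup>2 / (Y - X)\<^sup>2"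
    by (simp only: norm_divide norm_of_real power_divide power2_abs)
  have "(cmod N)\<^sup>2 = Re (N * cnj N)"
    using arg_cong[OF complex_norm_square[of N], of Re] by simp
  also have "\<dots> = (1 - X) * (1 - X) * Y + (Y - 1) * (Y - 1) * X
      + ((1 - X) * (Y - 1) + (Y - 1) * (1 - X)) * P"
    unfolding N_def Re_mult_cnj_linear_combination P_def X_def[symmetric] Y_def[symmetric] ..
  also have "\<dots> = (Y - X)\<^sup>2 + (X + Y - 2 * P) * ((1 - X) * (1 - Y))"
    by (simp add: power2_eq_square algebra_simps)
  also have "X + Y - 2 * P = (cmod (x - y))\<^sup>2"
    unfolding norm_diff_power2 X_def Y_def P_def by (simp add: algebra_simps)
  finally show ?thesis using w0 X_ne_Y by (simp add: field_simps)
qed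

lemma norm_ray_u0_minus_centre:
  "(cmod (of_real t * u0 - a))\<^sup>2 = ra\<^sup>2 + (t\<^sup>2 * (cmod u0)\<^sup>2 - 2 * t + 1)"
proof -
  have "Re (of_real t * u0 * cnj a) = t * Re (u0 * cnj a)" by (simp add: algebra_simps)
  then show ?thesis
    using norm_diff_power2[of "of_real t * u0" a] Re_u0_cnj_centre norm_centre_power2
    by (simp add: norm_mult power_mult_distrib)
qed

text \<open>The point of the ray through u0 below is where it crosses the chord [x,y].\<close>

lemma ray_u0_meets_chord_inside:
  "cmod (of_real ((1 - X * Y) / (2 - X - Y)) * u0 - a) < ra"
proof -
  define b d where "b = 1 - X * Y" and "d = 2 - X - Y"
  define \<alpha> where "\<alpha> = (1 - Y) / d"
  have b: "b \<noteq> 0" and d: "d > 0" using X_bounds Y_bounds XY_lt_1 by (simp_all add: b_def d_def)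
  have \<alpha>: "0 < \<alpha>" "\<alpha> < 1" using X_bounds Y_bounds by (simp_all add: \<alpha>_def d_def field_simps)
  have u0: "u0 = (y * of_real (d - (1 - Y)) + x * of_real (1 - Y)) / of_real b"
    unfolding u0_def b_def d_def by (simp add: algebra_simps)
  have "of_real (b / d) * u0 = (y * of_real (d - (1 - Y)) + x * of_real (1 - Y)) / of_real d"
    unfolding u0 using b by simp
  also have "\<dots> = of_real \<alpha> * x + of_real (1 - \<alpha>) * y"
    using d unfolding \<alpha>_def by (simp add: complex_eq_iff field_simps)
  finally have "of_real (b / d) * u0 = of_real \<alpha> * x + of_real (1 - \<alpha>) * y" .
  then show ?thesis
    unfolding b_def[symmetric] d_def[symmetric]
    using convex_combination_inside_circle[OF on_circle(1,2) x_ne_y \<alpha>] by simp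
qed

lemma cross_chord_ray_u0:
  "cross (y - x) (of_real t * u0 - x) = cross x y * (1 - t * (2 - X - Y) / (1 - X * Y))"
  unfolding u0_def cross_def
  by (simp add: Re_divide_of_real Im_divide_of_real add_divide_distrib diff_divide_distrib algebra_simps)

end

locale disk_pair_bisector = disk_pair +
  fixes w z :: complex and rw :: real
  assumes w_on_lines: "w \<in> line_through x y" "w \<in> line_through (inv_pt x) (inv_pt y)"
    and bisector_orthogonal: "orthogonal_circles w rw a ra"
    and z_on_circles: "cmod (z - w) = rw" "cmod (z - a) = ra"
    and z_in_disk: "cmod z < 1"
begin

lemma w_eq_w0: "w = w0"
  using chords_intersection_unique[OF radius_pos on_circle x_ne_inv_pt w0_on_lines w_on_lines] .

lemma bisector_radius_power2: "rw\<^sup>2 = (cmod w)\<^sup>2 - 1"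
proof -
  have "(cmod (w - a))\<^sup>2 = rw\<^sup>2 + ra\<^sup>2"
    using bisector_orthogonal by (simp add: orthogonal_circles_def dist_norm)
  then show ?thesis
    using norm_diff_power2[of w a] norm_centre_power2 Re_w0_cnj_centre by (simp add: w_eq_w0)
qed

lemma bisector_orthogonal_unit: "orthogonal_circles w rw 0 1"
  using bisector_orthogonal bisector_radius_power2 by (simp add: orthogonal_circles_def)

lemma bisector_radius_eq: "rw = cmod (x - y) * sqrt ((1 - X) * (1 - Y)) / \<bar>Y - X\<bar>"
proof -
  have nonneg: "(1 - X) * (1 - Y) \<ge> 0" using X_bounds Y_bounds by simp
  have "rw\<^sup>2 = (cmod (x - y) * sqrt ((1 - X) * (1 - Y)) / \<bar>Y - X\<bar>)\<^sup>2"
    unfolding bisector_radius_power2 w_eq_w0 norm_w0_power2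
    using nonneg by (simp add: power_divide power_mult_distrib)
  moreover have "rw > 0" using bisector_orthogonal by (simp add: orthogonal_circles_def)
  ultimately show ?thesis using nonneg by (simp add: power2_eq_iff_nonneg)
qed

lemma centre_ne_bisector_centre: "a \<noteq> w"
  using bisector_orthogonal by (auto simp: orthogonal_circles_def)

lemma u0_ne_0: "u0 \<noteq> 0"
  using Re_u0_cnj_centre by auto

lemma u0_orthogonal: "Re (u0 * cnj (a - w)) = 0"
  using Re_u0_cnj_centre Re_u0_cnj_w0 by (simp add: w_eq_w0 algebra_simps)

lemma z_on_ray_u0:
  obtains \<tau> where "0 < \<tau>" "\<tau> < (1 - X * Y) / (2 - X - Y)" "z = of_real \<tau> * u0"
proof -
  have "Re (z * cnj w) = (1 + (cmod z)\<^sup>2) / 2"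
    using z_on_circles(1) norm_diff_power2[of z w] bisector_radius_power2 by simp
  moreover have "Re (z * cnj a) = (1 + (cmod z)\<^sup>2) / 2"
    using z_on_circles(2) on_circle_orthogonal_to_unit_iff[OF norm_centre_power2 radius_nonneg] by simp
  ultimately have "Re (z * cnj (a - w)) = 0" by (simp add: algebra_simps)
  \<comment> \<open>z and u0 both lie on the radical axis of S(w,rw) and S(a,ra)\<close>
  then obtain \<tau> where z: "z = of_real \<tau> * u0"
    using orthogonal_to_same_vector_real_multiple centre_ne_bisector_centre u0_ne_0 u0_orthogonal
    by (metis right_minus_eq)
  have root: "(cmod u0)\<^sup>2 * \<tau>\<^sup>2 - 2 * \<tau> + 1 = 0"
    using norm_ray_u0_minus_centre[of \<tau>] z_on_circles(2) by (simp add: z algebra_simps)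
  have inside: "(cmod u0)\<^sup>2 * \<tau>\<^sup>2 < 1"
    using z_in_disk abs_square_less_1[of "cmod z"] by (simp add: z norm_mult power_mult_distrib mult.commute)
  have "(cmod (of_real ((1 - X * Y) / (2 - X - Y)) * u0 - a))\<^sup>2 < ra\<^sup>2"
    using ray_u0_meets_chord_inside by (intro power_strict_mono) simp_all
  then have "(cmod u0)\<^sup>2 * ((1 - X * Y) / (2 - X - Y))\<^sup>2 - 2 * ((1 - X * Y) / (2 - X - Y)) + 1 < 0"
    unfolding norm_ray_u0_minus_centre by (simp add: mult.commute)
  then have "\<tau> < (1 - X * Y) / (2 - X - Y)"
    using smaller_root_below_negative_point[OF zero_le_power2 root inside] by blast
  moreover have "0 < \<tau>" using root zero_le_power2[of "cmod u0"] zero_le_power2[of \<tau>]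
    by (smt (verit) mult_nonneg_nonneg)
  ultimately show ?thesis using that z by blast
qed

lemma z_in_arc: "z \<in> circ_arc a ra x y"
proof -
  obtain \<tau> where \<tau>: "0 < \<tau>" "\<tau> < (1 - X * Y) / (2 - X - Y)" "z = of_real \<tau> * u0"
    by (rule z_on_ray_u0)
  define c where "c = cross x y"
  have cc: "c * c > 0" using independent by (auto simp: c_def zero_less_mult_iff linorder_neq_iff)
  have "1 - \<tau> * (2 - X - Y) / (1 - X * Y) > 0"
    using \<tau>(2) X_bounds Y_bounds XY_lt_1 by (simp add: field_simps)
  then have "(c * c) * (1 - \<tau> * (2 - X - Y) / (1 - X * Y)) > 0"
    using cc by simp
  then have "cross (y - x) (z - x) * c > 0"
    unfolding \<tau>(3) cross_chord_ray_u0 c_def[symmetric] by (simp add: mult_ac)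
  from mult_pos_neg[OF this centre_beyond_chord[folded c_def]]
  have "(cross (y - x) (z - x) * cross (y - x) (a - x)) * (c * c) < 0"
    by (simp add: mult_ac)
  then have beyond: "cross (y - x) (z - x) * cross (y - x) (a - x) < 0"
    using cc by (simp add: mult_less_0_iff)
  have shift: "cross (x - a) (y - a) = cross (y - x) (a - x)" "(y - a) - (x - a) = y - x"
    "(z - a) - (x - a) = z - x"
    by (simp_all add: cross_def algebra_simps)
  obtain \<alpha> \<beta> where "\<alpha> \<ge> 0" "\<beta> \<ge> 0" "z - a = of_real \<alpha> * (x - a) + of_real \<beta> * (y - a)"
    using circle_point_beyond_chord_in_cone[OF radius_pos on_circle(1,2) z_on_circles(2)] beyond
    unfolding shift by fastforce
  then show ?thesis
    using z_on_circles(2) unfolding circ_arc_def by (auto simp: dist_norm norm_minus_commute)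
qed

lemma hrho_midpoint: "hrho x z = hrho z y"
proof (rule hrho_eq_on_bisector[OF x_in_disk y_in_disk z_in_disk])
  show "w * of_real ((cmod y)\<^sup>2 - (cmod x)\<^sup>2) = y * of_real (1 - (cmod x)\<^sup>2) - x * of_real (1 - (cmod y)\<^sup>2)"
    using X_ne_Y unfolding X_def[symmetric] Y_def[symmetric] w_eq_w0 w0_def by simp
  show "(cmod (z - w))\<^sup>2 = (cmod w)\<^sup>2 - 1"
    using z_on_circles(1) bisector_radius_power2 by simp
qed

lemma orthogonal_on_line_0z:
  assumes "Re (p * cnj (a - w)) = 0"
  shows "p \<in> line_through 0 z"
proof -
  obtain s where s: "p = of_real s * u0"
    using orthogonal_to_same_vector_real_multiple[OF _ u0_ne_0 assms u0_orthogonal]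
      centre_ne_bisector_centre by auto
  obtain \<tau> where \<tau>: "0 < \<tau>" "z = of_real \<tau> * u0" by (rule z_on_ray_u0)
  have "p = 0 + of_real (s / \<tau>) * (z - 0)" using \<tau> s by simp
  then show ?thesis unfolding line_through_iff by blast
qed

lemma polar_of_bisector_centre_on_line_0z:
  assumes "Re ((p - a) * cnj (w - a)) = ra\<^sup>2"
  shows "p \<in> line_through 0 z"
proof (rule orthogonal_on_line_0z)
  have "Re ((p - a) * cnj (w - a)) = Re (p * cnj w) - Re (p * cnj a) - Re (w * cnj a) + (cmod a)\<^sup>2"
    unfolding cmod_power2 by (simp add: algebra_simps power2_eq_square)
  then show "Re (p * cnj (a - w)) = 0"
    using assms Re_w0_cnj_centre norm_centre_power2 by (simp add: w_eq_w0 algebra_simps)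
qed

lemma diagonal_point_on_line_0z:
  assumes "cmod (p1 - a) = ra" "cmod (p2 - a) = ra" "cmod (p3 - a) = ra" "cmod (p4 - a) = ra"
    and "p1 \<noteq> p2" "p1 \<noteq> p3" "p1 \<noteq> p4"
    and "w \<in> line_through p1 p2" "w \<in> line_through p3 p4"
    and "e \<in> line_through p1 p3" "e \<in> line_through p2 p4"
  shows "e \<in> line_through 0 z"
  by (rule polar_of_bisector_centre_on_line_0z[OF diagonal_points_conjugate[OF radius_pos assms]])

end

theorem lemma4p6:
  fixes x y a xs ys w u v s t k z :: complex and ra rw :: real
  assumes hx: "x \<in> ball 0 1" "x \<noteq> 0"
    and hy: "y \<in> ball 0 1" "y \<noteq> 0"
    and noncol: "\<not> collinear {0, x, y}"
    and hxy: "cmod x \<noteq> cmod y"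
    and ha: "a = \<i> * (y * complex_of_real (1 + (cmod x)\<^sup>2) - x * complex_of_real (1 + (cmod y)\<^sup>2))
                 / complex_of_real (2 * (Im x * Re y - Re x * Im y))"
    and hra: "ra = cmod (x - y) * cmod (x * complex_of_real ((cmod y)\<^sup>2) - y)
                 / (2 * cmod y * \<bar>Re x * Im y - Im x * Re y\<bar>)"
    and hstar: "sphere 0 1 \<inter> sphere a ra = {xs, ys}"
    and order1: "x \<in> circ_arc a ra xs y"
    and order2: "y \<in> circ_arc a ra x ys"
    and hw: "w \<in> line_through x y" "w \<in> line_through (inv_pt x) (inv_pt y)"
    and hu: "u \<in> line_through x (inv_pt y)" "u \<in> line_through y (inv_pt x)"
    and hv: "v \<in> line_through x xs" "v \<in> line_through y ys"
    and hs: "s \<in> line_through x ys" "s \<in> line_through y xs"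
    and ht: "t \<in> line_through xs (inv_pt y)" "t \<in> line_through ys (inv_pt x)"
    and hk: "k \<in> line_through xs (inv_pt x)" "k \<in> line_through ys (inv_pt y)"
    and hrw: "orthogonal_circles w rw a ra"
    and hz: "z \<in> sphere w rw" "z \<in> sphere a ra" "z \<in> ball 0 1"
  shows "(orthogonal_circles w rw 0 1
          \<and> z \<in> circ_arc a ra x y \<and> hrho x z = hrho z y
          \<and> w = (y * complex_of_real (1 - (cmod x)\<^sup>2) - x * complex_of_real (1 - (cmod y)\<^sup>2))
                / complex_of_real ((cmod y)\<^sup>2 - (cmod x)\<^sup>2)
          \<and> rw = cmod (x - y) * sqrt ((1 - (cmod x)\<^sup>2) * (1 - (cmod y)\<^sup>2))
                / \<bar>(cmod y)\<^sup>2 - (cmod x)\<^sup>2\<bar>)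
       \<and> (v \<in> line_through 0 z \<and> s \<in> line_through 0 z \<and> t \<in> line_through 0 z
          \<and> k \<in> line_through 0 z
          \<and> u \<in> line_through 0 z \<and> u \<in> line_through xs ys
          \<and> u = (y * complex_of_real (1 - (cmod x)\<^sup>2) + x * complex_of_real (1 - (cmod y)\<^sup>2))
                / complex_of_real (1 - (cmod x)\<^sup>2 * (cmod y)\<^sup>2))"
proof -
  \<comment> \<open>order1 and order2 only fix the labelling of xs and ys; the argument is symmetric in them\<close>
  interpret disk_pair_bisector x y a ra w z rw
    using hx hy hxy ha hra hw hrw hz cross_ne_0_if_not_collinear[OF noncol]
    by unfold_locales (auto simp: dist_norm norm_minus_commute)
  have xs: "cmod xs = 1" "cmod (xs - a) = ra" and ys: "cmod ys = 1" "cmod (ys - a) = ra"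
    using hstar by (auto simp: dist_norm norm_minus_commute)
  have xs_ne_ys: "xs \<noteq> ys"
    by (rule unit_circle_meets_orthogonal_circle_twice[OF norm_centre_power2 radius_pos hstar])
  have distinct: "x \<noteq> xs" "x \<noteq> ys" "xs \<noteq> inv_pt x" "xs \<noteq> inv_pt y"
    using xs ys x_in_disk norm_inv_pt_gt_1 by auto
  note chord_xs_ys = common_chord_of_circle_orthogonal_to_unit[OF norm_centre_power2 radius_pos hstar]
  have w_chord: "w \<in> line_through xs ys"
    using chord_xs_ys Re_w0_cnj_centre by (simp add: w_eq_w0)
  have u: "u = u0"
    using chords_intersection_unique[OF radius_pos on_circle(1,4,2,3) x_ne_y x_ne_inv_pt(1)
        u0_on_lines hu] .
  have "v \<in> line_through 0 z"
    by (rule diagonal_point_on_line_0z[OF on_circle(1,2) xs(2) ys(2) x_ne_y distinct(1,2)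
          hw(1) w_chord hv])
  moreover have "s \<in> line_through 0 z"
    by (rule diagonal_point_on_line_0z[OF on_circle(1,2) ys(2) xs(2) x_ne_y distinct(2,1)
          hw(1) line_through_commute[OF w_chord] hs])
  moreover have "t \<in> line_through 0 z"
    by (rule diagonal_point_on_line_0z[OF xs(2) ys(2) on_circle(4,3) xs_ne_ys distinct(4,3)
          w_chord line_through_commute[OF hw(2)] ht])
  moreover have "k \<in> line_through 0 z"
    by (rule diagonal_point_on_line_0z[OF xs(2) ys(2) on_circle(3,4) xs_ne_ys distinct(3,4)
          w_chord hw(2) hk])
  moreover have "u \<in> line_through 0 z" "u \<in> line_through xs ys"
    using orthogonal_on_line_0z[OF u0_orthogonal] chord_xs_ys[OF Re_u0_cnj_centre] by (simp_all add: u)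
  moreover note bisector_orthogonal_unit z_in_arc hrho_midpoint
    w_eq_w0[unfolded w0_def X_def Y_def] bisector_radius_eq[unfolded X_def Y_def]
    u[unfolded u0_def X_def Y_def]
  ultimately show ?thesis by blast
qed

end
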